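(* Let $t\ge0$ and $b_0,\dots,b_t\ge0$ be integers and let $M=\{0^{(b_0)},1^{(b_1)},\dots,t^{(b_t)}\}$ be the multiset containing $b_i$ copies of $i$. Then the number of vn-arrangements of $M$ is \[\prod_{i=0}^{t-1}\binom{b_i+b_{i+1}}{b_i}.\]
   Context: Let $b=b_0+\cdots+b_t$. A vn-arrangement of the multiset $M$ is a sequence $(v_1,\dots,v_b)$ that lists the elements of $M$ with their multiplicities (i.e., an arrangement of $M$) such that $v_{i+1}-v_i\le1$ for all $1\le i<b$. An empty product equals $1$. *)

theory Defs
  imports Main "HOL-Library.Multiset"
begin

definition level_mset :: "nat \<Rightarrow> (nat \<Rightarrow> nat) \<Rightarrow> nat multiset" where
  "level_mset t b = (\<Sum>i\<in>{0..t}. replicate_mset (b i) i)"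

definition vn_arrangement :: "nat multiset \<Rightarrow> nat list \<Rightarrow> bool" where
  "vn_arrangement M vs \<longleftrightarrow> mset vs = M \<and>
     (\<forall>i. Suc i < length vs \<longrightarrow> int (vs ! Suc i) - int (vs ! i) \<le> 1)"

end

(*
  Deleting every copy of the largest value t + 1 from a vn-arrangement of the multiset with
  multiplicities b 0, ..., b (t + 1) leaves a vn-arrangement w of the multiset with multiplicities
  b 0, ..., b t, since an up-step into t + 1 could only come from t or t + 1 and all remaining
  values are at most t. Conversely, the copies of t + 1 can be put back into w exactly as runs
  standing at the front or directly after an occurrence of t, and nothing restricts the entry
  following such a run. So every w has as many extensions as there are ways of distributing
  b (t + 1) identical items over the b t + 1 slots, namely (b t + b (t + 1)) choose b t.
*)

theory Submission
  imports Defs "HOL-Combinatorics.Multiset_Permutations"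
begin

lemma mset_eq_replicate_mset_iff: "mset vs = replicate_mset n x \<longleftrightarrow> vs = replicate n x"
proof
  assume vs: "mset vs = replicate_mset n x"
  have "length vs = n" using arg_cong[OF vs, of size] by simp
  moreover have "\<forall>y\<in>set vs. y = x" using vs by (metis in_replicate_mset set_mset_mset)
  ultimately show "vs = replicate n x" by (simp add: replicate_eqI)
qed simp

lemma mset_eq_filter_neq_plus_replicate:
  assumes "filter (\<lambda>z. z \<noteq> x) vs = w" and "count_list vs x = k"
  shows "mset vs = mset w + replicate_mset k x"
  unfolding assms[symmetric] by (induction vs) auto

text \<open>The flag \<open>a\<close> says whether \<open>Suc m\<close> may stand at the current position, i.e. whether
  the previous entry is \<open>m\<close> or \<open>Suc m\<close>; at the front of a sequence it is \<open>True\<close>.\<close>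

fun tops_attached :: "nat \<Rightarrow> bool \<Rightarrow> nat list \<Rightarrow> bool" where
  "tops_attached m a [] = True"
| "tops_attached m a (x # xs) = ((x = Suc m \<longrightarrow> a) \<and> tops_attached m (x = m \<or> x = Suc m) xs)"

lemma successively_le_Suc_Cons_iff_filter:
  assumes "set (x # vs) \<subseteq> {..Suc m}"
  shows "successively (\<lambda>x y. y \<le> Suc x) (x # vs) \<longleftrightarrow>
     tops_attached m (x = m \<or> x = Suc m) vs \<and>
     successively (\<lambda>x y. y \<le> Suc x) (filter (\<lambda>z. z \<noteq> Suc m) (x # vs))"
  using assms
proof (induction vs arbitrary: x)
  case Nil
  then show ?case by simp
next
  case (Cons y ys)
  have "successively (\<lambda>x y. y \<le> Suc x) (z # filter (\<lambda>z. z \<noteq> Suc m) ys) \<longleftrightarrow>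
      successively (\<lambda>x y. y \<le> Suc x) (filter (\<lambda>z. z \<noteq> Suc m) ys)" if "m \<le> z" for z
    using Cons.prems that
    by (cases "filter (\<lambda>z. z \<noteq> Suc m) ys") (auto simp: subset_iff dest!: filter_eq_ConsD)
  then show ?case using Cons by (cases "y = Suc m"; cases "x = Suc m") auto
qed

lemma successively_le_Suc_iff_filter:
  assumes "set vs \<subseteq> {..Suc m}"
  shows "successively (\<lambda>x y. y \<le> Suc x) vs \<longleftrightarrow>
     tops_attached m True vs \<and> successively (\<lambda>x y. y \<le> Suc x) (filter (\<lambda>z. z \<noteq> Suc m) vs)"
  using assms successively_le_Suc_Cons_iff_filter by (cases vs) auto

definition top_insertions :: "nat \<Rightarrow> bool \<Rightarrow> nat list \<Rightarrow> nat \<Rightarrow> nat list set" where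
  "top_insertions m a w k =
     {vs. filter (\<lambda>z. z \<noteq> Suc m) vs = w \<and> count_list vs (Suc m) = k \<and> tops_attached m a vs}"

lemma finite_top_insertions: "finite (top_insertions m a w k)"
proof (rule finite_subset)
  show "top_insertions m a w k \<subseteq> permutations_of_multiset (mset w + replicate_mset k (Suc m))"
  proof
    fix vs assume "vs \<in> top_insertions m a w k"
    then have "mset vs = mset w + replicate_mset k (Suc m)"
      by (intro mset_eq_filter_neq_plus_replicate) (simp_all add: top_insertions_def)
    then show "vs \<in> permutations_of_multiset (mset w + replicate_mset k (Suc m))"
      by (simp add: permutations_of_multiset_def)
  qed
qed simp

lemma disjoint_top_insertions:
  "w \<noteq> w' \<Longrightarrow> top_insertions m a w k \<inter> top_insertions m a' w' k' = {}"
  by (auto simp: top_insertions_def)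

lemma tops_attached_replicate: "tops_attached m a (replicate k (Suc m)) \<longleftrightarrow> a \<or> k = 0"
  by (induction k arbitrary: a) auto

lemma top_insertions_Nil:
  "top_insertions m a [] k = (if a \<or> k = 0 then {replicate k (Suc m)} else {})"
proof -
  have "filter (\<lambda>z. z \<noteq> Suc m) vs = [] \<and> count_list vs (Suc m) = k \<longleftrightarrow>
      vs = replicate k (Suc m)" for vs
  proof
    assume "filter (\<lambda>z. z \<noteq> Suc m) vs = [] \<and> count_list vs (Suc m) = k"
    then have "mset vs = replicate_mset k (Suc m)"
      using mset_eq_filter_neq_plus_replicate[of "Suc m" vs "[]" k] by simp
    then show "vs = replicate k (Suc m)" by (rule mset_eq_replicate_mset_iff[THEN iffD1])
  next
    assume "vs = replicate k (Suc m)"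
    then show "filter (\<lambda>z. z \<noteq> Suc m) vs = [] \<and> count_list vs (Suc m) = k"
      by (simp flip: count_mset)
  qed
  then have "top_insertions m a [] k = {vs \<in> {replicate k (Suc m)}. tops_attached m a vs}"
    unfolding top_insertions_def by blast
  also have "\<dots> = (if tops_attached m a (replicate k (Suc m)) then {replicate k (Suc m)} else {})"
    by auto
  finally show ?thesis by (simp add: tops_attached_replicate)
qed

lemma top_insertions_Cons:
  assumes "x \<noteq> Suc m"
  shows "top_insertions m a (x # w) k =
    (if a \<and> k \<ge> 1 then Cons (Suc m) ` top_insertions m True (x # w) (k - 1) else {})
    \<union> Cons x ` top_insertions m (x = m) w k"
proof (rule set_eqI)
  fix vs show "vs \<in> top_insertions m a (x # w) k \<longleftrightarrow>
    vs \<in> (if a \<and> k \<ge> 1 then Cons (Suc m) ` top_insertions m True (x # w) (k - 1) else {})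
         \<union> Cons x ` top_insertions m (x = m) w k"
    using assms by (cases vs) (auto simp: top_insertions_def)
qed

text \<open>There are \<open>count_list w m + of_bool a\<close> slots for the runs of \<open>Suc m\<close>; when there are
  none, the truncated subtraction yields \<open>(k - 1) choose k\<close>, which is \<open>1\<close> for \<open>k = 0\<close>
  and \<open>0\<close> otherwise.\<close>

lemma card_top_insertions:
  assumes "Suc m \<notin> set w"
  shows "card (top_insertions m a w k) = (k + count_list w m + of_bool a - 1) choose k"
  using assms
proof (induction w arbitrary: a k)
  case Nil
  show ?case unfolding top_insertions_Nil by (cases a; cases k) simp_all
next
  case (Cons x w)
  have x: "x \<noteq> Suc m" and w: "Suc m \<notin> set w" using Cons.prems by auto
  note IH = Cons.IH[OF w]
  define n where "n = count_list (x # w) m"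
  have card_tail: "card (Cons x ` top_insertions m (x = m) w k) = (k + n - 1) choose k" for k
    by (simp add: card_image IH n_def)
  have card_True: "card (top_insertions m True (x # w) k) = (k + n) choose k" for k
  proof (induction k)
    case 0
    show ?case using card_tail[of 0] by (subst top_insertions_Cons[OF x]) simp
  next
    case (Suc j)
    have "card (top_insertions m True (x # w) (Suc j)) =
        card (Cons (Suc m) ` top_insertions m True (x # w) j) +
        card (Cons x ` top_insertions m (x = m) w (Suc j))"
      by (subst top_insertions_Cons[OF x], simp)
        (rule card_Un_disjoint; use x finite_top_insertions in blast)
    also have "\<dots> = ((j + n) choose j) + ((j + n) choose (Suc j))"
      using Suc.IH card_tail[of "Suc j"] by (simp add: card_image)
    finally show ?case by simp
  qed
  show ?case
  proof (cases a)
    case True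
    then show ?thesis using card_True by (simp add: n_def)
  next
    case False
    then show ?thesis using card_tail by (subst top_insertions_Cons[OF x]) (simp add: n_def)
  qed
qed

lemma vn_arrangement_iff_successively:
  "vn_arrangement M vs \<longleftrightarrow> mset vs = M \<and> successively (\<lambda>x y. y \<le> Suc x) vs"
  unfolding vn_arrangement_def successively_conv_nth by auto

lemma finite_vn_arrangements: "finite {vs. vn_arrangement M vs}"
  using finite_permutations_of_multiset[of M]
  by (simp add: vn_arrangement_def permutations_of_multiset_def)

lemma count_level_mset: "count (level_mset t b) x = (if x \<le> t then b x else 0)"
  by (simp add: level_mset_def count_sum)

lemma level_mset_Suc:
  "level_mset (Suc t) b = level_mset t b + replicate_mset (b (Suc t)) (Suc t)"
  by (simp add: level_mset_def)

lemma set_subset_atMost_if_mset_eq_level_mset: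
  assumes "mset vs = level_mset t b"
  shows "set vs \<subseteq> {..t}"
proof
  fix x assume "x \<in> set vs"
  then have "count (mset vs) x > 0" by simp
  then show "x \<in> {..t}" using assms by (simp add: count_level_mset split: if_splits)
qed

lemma vn_arrangements_level_mset_0:
  "{vs. vn_arrangement (level_mset 0 b) vs} = {replicate (b 0) 0}"
proof -
  have "successively (\<lambda>x y. y \<le> Suc x) (replicate n 0)" for n
    by (simp add: successively_conv_nth)
  then show ?thesis
    by (auto simp: vn_arrangement_iff_successively level_mset_def mset_eq_replicate_mset_iff)
qed

lemma vn_arrangements_level_mset_Suc:
  "{vs. vn_arrangement (level_mset (Suc t) b) vs} =
     (\<Union>w\<in>{vs. vn_arrangement (level_mset t b) vs}. top_insertions t True w (b (Suc t)))"
  (is "?L = (\<Union>w\<in>?A. ?F w)")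
proof (intro set_eqI iffI)
  fix vs assume "vs \<in> ?L"
  then have vs: "mset vs = level_mset (Suc t) b" "successively (\<lambda>x y. y \<le> Suc x) vs"
    by (simp_all add: vn_arrangement_iff_successively)
  define w where "w = filter (\<lambda>z. z \<noteq> Suc t) vs"
  have "mset w = level_mset t b"
    by (rule multiset_eqI) (simp add: w_def vs(1) count_level_mset)
  moreover have "count_list vs (Suc t) = b (Suc t)"
    using arg_cong[OF vs(1), of "\<lambda>M. count M (Suc t)"] by (simp add: count_mset count_level_mset)
  moreover note successively_le_Suc_iff_filter[OF set_subset_atMost_if_mset_eq_level_mset[OF vs(1)]]
  ultimately show "vs \<in> (\<Union>w\<in>?A. ?F w)"
    using vs(2) by (auto simp: vn_arrangement_iff_successively top_insertions_def w_def)
next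
  fix vs assume "vs \<in> (\<Union>w\<in>?A. ?F w)"
  then obtain w where "vn_arrangement (level_mset t b) w" and "vs \<in> ?F w"
    by blast
  then have w: "mset w = level_mset t b" "successively (\<lambda>x y. y \<le> Suc x) w"
    and vs: "filter (\<lambda>z. z \<noteq> Suc t) vs = w" "count_list vs (Suc t) = b (Suc t)"
      "tops_attached t True vs"
    by (simp_all add: vn_arrangement_iff_successively top_insertions_def)
  have "mset vs = level_mset (Suc t) b"
    using mset_eq_filter_neq_plus_replicate[OF vs(1,2)] by (simp add: w(1) level_mset_Suc)
  moreover note successively_le_Suc_iff_filter[OF set_subset_atMost_if_mset_eq_level_mset[OF this]]
  ultimately show "vs \<in> ?L"
    using vs w by (simp add: vn_arrangement_iff_successively)
qed

lemma card_top_insertions_vn_arrangement: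
  assumes "vn_arrangement (level_mset t b) w"
  shows "card (top_insertions t True w k) = (b t + k) choose (b t)"
proof -
  have w: "mset w = level_mset t b" using assms by (simp add: vn_arrangement_def)
  have "Suc t \<notin> set w" using set_subset_atMost_if_mset_eq_level_mset[OF w] by auto
  moreover have "count_list w t = b t"
    using arg_cong[OF w, of "\<lambda>M. count M t"] by (simp add: count_mset count_level_mset)
  ultimately have "card (top_insertions t True w k) = (k + b t) choose k"
    by (simp add: card_top_insertions)
  also have "\<dots> = (b t + k) choose (b t)"
    using binomial_symmetric[of k "k + b t"] by (simp add: add.commute)
  finally show ?thesis .
qed

theorem proposition4p1:
  fixes t :: nat and b :: "nat \<Rightarrow> nat"
  shows "card {vs. vn_arrangement (level_mset t b) vs}
           = (\<Prod>i<t. (b i + b (Suc i)) choose (b i))"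
proof (induction t)
  case 0
  show ?case by (simp add: vn_arrangements_level_mset_0)
next
  case (Suc t)
  let ?A = "{vs. vn_arrangement (level_mset t b) vs}"
  have "card {vs. vn_arrangement (level_mset (Suc t) b) vs} =
      (\<Sum>w\<in>?A. card (top_insertions t True w (b (Suc t))))"
    unfolding vn_arrangements_level_mset_Suc
    by (rule card_UN_disjoint)
      (auto simp: finite_vn_arrangements finite_top_insertions disjoint_top_insertions)
  also have "\<dots> = card ?A * ((b t + b (Suc t)) choose (b t))"
    by (simp add: card_top_insertions_vn_arrangement)
  finally show ?case using Suc.IH by simp
qed

end
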